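(* Let $k\ge 4$, $n=2k-1$, $\eta=(\eta_1<\dots<\eta_l)\in\mathbb{D}_k\setminus\{(3,k-3)\}$, and let $Y_{2\eta^*}$ be the Young diagram whose main diagonal consists of exactly the cells $c_{1,1},\dots,c_{l+1,l+1}$ and which satisfies $h_{1,1}=2n-4$, $h_{i,i}=2\eta_{l-(i-2)}$ for $2\le i\le l+1$, and $a(c_{i,i})=l(c_{i,i})+1$ for $1\le i\le l+1$. Let $\lambda$ be the partition whose parts are the hook lengths of the first-column cells of $Y_{2\eta^*}$. Then $n-2$ is not a part of $\lambda$ (equivalently, $n-2\in\mathbb{N}_0\setminus\lambda$).
   Context: $\mathbb{D}_N$ is the set of partitions of $N$ into distinct parts, i.e. sequences $(\eta_1<\dots<\eta_l)$ of positive integers with sum $N$ and $l\ge 2$. Young diagrams are in English convention: rows top to bottom, columns left to right, $c_{i,j}$ the cell in row $i$, column $j$; arm $a(c_{i,j})$ = number of cells to its right in its row, leg $l(c_{i,j})$ = number of cells below it in its column, hook length $h_{i,j}=a+l+1$. *)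

theory Defs
  imports Main
begin

text \<open>Young diagrams in English convention, as finite sets of cells (i,j) = (row, column),
  rows and columns indexed from 1.\<close>

definition young_diagram :: "(nat \<times> nat) set \<Rightarrow> bool" where
  "young_diagram Y \<longleftrightarrow> finite Y \<and> (\<forall>(i,j)\<in>Y. 1 \<le> i \<and> 1 \<le> j) \<and>
     (\<forall>i j i' j'. (i,j) \<in> Y \<and> 1 \<le> i' \<and> i' \<le> i \<and> 1 \<le> j' \<and> j' \<le> j \<longrightarrow> (i',j') \<in> Y)"

definition arm :: "(nat \<times> nat) set \<Rightarrow> nat \<times> nat \<Rightarrow> nat" where
  "arm Y c = card {j'. j' > snd c \<and> (fst c, j') \<in> Y}"

definition leg :: "(nat \<times> nat) set \<Rightarrow> nat \<times> nat \<Rightarrow> nat" where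
  "leg Y c = card {i'. i' > fst c \<and> (i', snd c) \<in> Y}"

definition hook :: "(nat \<times> nat) set \<Rightarrow> nat \<times> nat \<Rightarrow> nat" where
  "hook Y c = arm Y c + leg Y c + 1"

definition distinct_partitions :: "nat \<Rightarrow> nat list set" where
  "distinct_partitions N = {eta. sorted_wrt (<) eta \<and> (\<forall>x\<in>set eta. 0 < x) \<and>
                               sum_list eta = N \<and> length eta \<ge> 2}"

end

theory Submission
  imports Defs
begin

text \<open>Rows and columns of a Young diagram are initial segments, so
  hook Y (i, 1) = row_length Y i - i + col_length Y 1. From arm = leg + 1 at (1,1) we get
  hook Y (1, 1) = 2 * col_length Y 1, hence col_length Y 1 = n - 2, and a first-column hook
  equals n - 2 exactly when row i has length i. Then (i,i) is a diagonal cell with arm 0,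
  whereas every diagonal cell has arm = leg + 1 > 0. Neither eta nor the other diagonal
  hook lengths enter the argument.\<close>

definition row_length :: "(nat \<times> nat) set \<Rightarrow> nat \<Rightarrow> nat" where
  "row_length Y i = card {j. (i, j) \<in> Y}"

definition col_length :: "(nat \<times> nat) set \<Rightarrow> nat \<Rightarrow> nat" where
  "col_length Y j = card {i. (i, j) \<in> Y}"

lemma down_closed_eq_atLeastAtMost_card:
  fixes S :: "nat set"
  assumes "finite S" and "\<forall>x\<in>S. 1 \<le> x" and "\<forall>x\<in>S. \<forall>y. 1 \<le> y \<and> y \<le> x \<longrightarrow> y \<in> S"
  shows "S = {1..card S}"
proof (cases "S = {}")
  case False
  have "S \<subseteq> {1..Max S}"
    using assms(1,2) by auto
  moreover have "{1..Max S} \<subseteq> S"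
    using assms(3) Max_in[OF assms(1) False] by auto
  ultimately have "S = {1..Max S}"
    by (rule subset_antisym)
  then show ?thesis
    by (metis card_atLeastAtMost diff_Suc_1)
qed simp

lemma young_diagram_row:
  assumes "young_diagram Y"
  shows "{j. (i, j) \<in> Y} = {1..row_length Y i}"
proof -
  have "{j. (i, j) \<in> Y} \<subseteq> snd ` Y"
    by force
  then have "finite {j. (i, j) \<in> Y}"
    using assms finite_subset unfolding young_diagram_def by blast
  then show ?thesis
    using assms unfolding row_length_def young_diagram_def
    by (intro down_closed_eq_atLeastAtMost_card) blast+
qed

lemma young_diagram_col:
  assumes "young_diagram Y"
  shows "{i. (i, j) \<in> Y} = {1..col_length Y j}"
proof -
  have "{i. (i, j) \<in> Y} \<subseteq> fst ` Y"
    by force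
  then have "finite {i. (i, j) \<in> Y}"
    using assms finite_subset unfolding young_diagram_def by blast
  then show ?thesis
    using assms unfolding col_length_def young_diagram_def
    by (intro down_closed_eq_atLeastAtMost_card) blast+
qed

lemma young_diagram_mem_iff_row:
  "young_diagram Y \<Longrightarrow> (i, j) \<in> Y \<longleftrightarrow> 1 \<le> j \<and> j \<le> row_length Y i"
  using young_diagram_row by (metis atLeastAtMost_iff mem_Collect_eq)

lemma young_diagram_mem_iff_col:
  "young_diagram Y \<Longrightarrow> (i, j) \<in> Y \<longleftrightarrow> 1 \<le> i \<and> i \<le> col_length Y j"
  using young_diagram_col by (metis atLeastAtMost_iff mem_Collect_eq)

lemma arm_eq_row_length:
  assumes "young_diagram Y"
  shows "arm Y (i, j) = row_length Y i - j"
proof -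
  have "{j'. j < j' \<and> (i, j') \<in> Y} = {j<..row_length Y i}"
    using young_diagram_mem_iff_row[OF assms] by auto
  then show ?thesis
    unfolding arm_def by simp
qed

lemma leg_eq_col_length:
  assumes "young_diagram Y"
  shows "leg Y (i, j) = col_length Y j - i"
proof -
  have "{i'. i < i' \<and> (i', j) \<in> Y} = {i<..col_length Y j}"
    using young_diagram_mem_iff_col[OF assms] by auto
  then show ?thesis
    unfolding leg_def by simp
qed

lemma hook_corner_eq_double_col_length:
  assumes "young_diagram Y" and "(1, 1) \<in> Y" and "arm Y (1, 1) = leg Y (1, 1) + 1"
  shows "hook Y (1, 1) = 2 * col_length Y 1"
  using assms young_diagram_mem_iff_col[OF assms(1), of 1 1]
  by (simp add: hook_def leg_eq_col_length)

lemma hook_first_column_eq_col_length_iff: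
  assumes "young_diagram Y" and "(i, 1) \<in> Y"
  shows "hook Y (i, 1) = col_length Y 1 \<longleftrightarrow> row_length Y i = i"
proof -
  have "1 \<le> row_length Y i"
    using assms young_diagram_mem_iff_row by blast
  moreover have "1 \<le> i" and "i \<le> col_length Y 1"
    using assms young_diagram_mem_iff_col by blast+
  moreover have "hook Y (i, 1) = (row_length Y i - 1) + (col_length Y 1 - i) + 1"
    by (simp add: hook_def arm_eq_row_length[OF assms(1)] leg_eq_col_length[OF assms(1)])
  ultimately show ?thesis
    by linarith
qed

lemma hook_first_column_ne_col_length:
  assumes "young_diagram Y" and "\<forall>i. (i, i) \<in> Y \<longrightarrow> arm Y (i, i) > 0" and "(i, 1) \<in> Y"
  shows "hook Y (i, 1) \<noteq> col_length Y 1"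
proof
  assume "hook Y (i, 1) = col_length Y 1"
  then have row: "row_length Y i = i"
    using hook_first_column_eq_col_length_iff assms(1,3) by blast
  moreover have "1 \<le> i"
    using assms(1,3) young_diagram_mem_iff_col by blast
  ultimately have "(i, i) \<in> Y"
    using young_diagram_mem_iff_row[OF assms(1)] by simp
  moreover have "arm Y (i, i) = 0"
    using row by (simp add: arm_eq_row_length[OF assms(1)])
  ultimately show False
    using assms(2) by auto
qed

theorem corollary3p18:
  fixes k n :: nat and eta :: "nat list" and Y :: "(nat \<times> nat) set"
  assumes "k \<ge> 4" and "n = 2 * k - 1"
    and "eta \<in> distinct_partitions k" and "eta \<noteq> [3, k - 3]"
    and "young_diagram Y"
    and "{i. (i, i) \<in> Y} = {1 .. length eta + 1}"
    and "hook Y (1, 1) = 2 * n - 4"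
    and "\<forall>i\<in>{2 .. length eta + 1}. hook Y (i, i) = 2 * eta ! (length eta + 1 - i)"
    and "\<forall>i\<in>{1 .. length eta + 1}. arm Y (i, i) = leg Y (i, i) + 1"
  shows "n - 2 \<notin> {hook Y (i, 1) | i. (i, 1) \<in> Y}"
proof
  assume "n - 2 \<in> {hook Y (i, 1) | i. (i, 1) \<in> Y}"
  then obtain i where "(i, 1) \<in> Y" and hook_i: "hook Y (i, 1) = n - 2"
    by auto
  have diagonal_arm_pos: "\<forall>i. (i, i) \<in> Y \<longrightarrow> arm Y (i, i) > 0"
  proof (intro allI impI)
    fix i
    assume "(i, i) \<in> Y"
    then have "i \<in> {1 .. length eta + 1}"
      using assms(6) by blast
    then show "arm Y (i, i) > 0"
      using assms(9) by simp
  qed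
  have "(1, 1) \<in> Y" and "arm Y (1, 1) = leg Y (1, 1) + 1"
    using assms(6,9) by auto
  then have "hook Y (1, 1) = 2 * col_length Y 1"
    using hook_corner_eq_double_col_length assms(5) by blast
  then have "col_length Y 1 = n - 2"
    using assms(1,2,7) by simp
  then show False
    using hook_first_column_ne_col_length[OF assms(5) diagonal_arm_pos \<open>(i, 1) \<in> Y\<close>] hook_i
    by simp
qed

end
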